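(* Consider a trajectory of the no-slip billiard in a solid cylinder $\mathcal{B}\subset\mathbb{R}^n$ with axis vector $e$, under no forces, that is transversely periodic of period $2$ (its projection to the transverse billiard in $e^\perp$ is periodic of period $2$, so the collision normals alternate between two values and all intercollision times are equal; this common time is set to $1$, and $h_0=0$). Define $Q=\mathcal{A}_1\mathcal{A}_2$, $\mathcal{A}=\mathcal{A}_1$, and the row vector $\xi=(1+c,\,-s\nu_1^\dagger)$. Then $Q\in SO(n)$. Let $P$ be the orthogonal projection onto the eigenspace of $Q$ for the eigenvalue $1$. Then $$h_\ell=\hat h_\ell+\Big\lfloor\frac{\ell}{2}\Big\rfloor\xi P\Lambda_0,$$ where $(\hat h_\ell)$ is a bounded sequence. Consequently $\lim_{\ell\to\infty}h_\ell/\ell=\frac12\xi P\Lambda_0$. In particular, if $1$ is not in the spectrum of $Q$, the orbit is bounded; if $\xi$ is not orthogonal to the eigenspace of $Q$ for the eigenvalue $1$, then for generic initial conditions the orbit is not bounded.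
   Context: The particle is a ball of radius $r>0$ with rotationally symmetric mass distribution of total mass $m$ and second-moment matrix per unit mass $\lambda I$, $\lambda=(r\gamma)^2/2$, $\gamma>0$; $c=\frac{1-\gamma^2}{1+\gamma^2}$, $s=\frac{2\gamma}{1+\gamma^2}$; $(a\wedge b)x=(a\cdot x)b-(b\cdot x)a$. The solid cylinder is $\mathcal{B}=\overline{\mathcal{B}}\times\mathbb{R}e$ with $\overline{\mathcal{B}}\subset W:=e^\perp$ (the set of admissible centers); $\nu_a\in W$ is the inward unit normal at a regular boundary point $a$. A state is $(a,u,U)$, $u$ the center-of-mass velocity, $U\in\mathfrak{so}(n)$ the angular velocity matrix. Between collisions $U$ is constant and the center of mass moves freely; at a collision at $a$ the pre-collision $(u,U)$ is replaced by $C_a(u,U)=\big(cu-\tfrac{s}{\gamma}(u\cdot\nu_a)\nu_a+s\gamma rU\nu_a,\ \tfrac{s}{\gamma r}\nu_a\wedge u+U-\tfrac{s}{\gamma}\nu_a\wedge U\nu_a\big)$. For the $j$th collision at $a_j$ ($j=0,1,\dots$), $\nu_j=\nu_{a_j}$, $(u_j,U_j)$ are the post-collision velocities, $h_j=a_j\cdot e$, $\sigma_j=u_j\cdot e$, $w_j=\gamma rU_je$, $\Lambda_j=(\sigma_j,w_j)\in\mathbb{R}\oplus W\cong\mathbb{R}^n$. For a boundary point $a$ let $\Pi_a$ be the orthogonal projection onto $\{w\in W:w\cdot\nu_a=0\}$ and $\mathcal{A}(a)$ the linear map of $\mathbb{R}\oplus W$ with block matrix $\begin{pmatrix}c&-s\nu_a^\dagger\\-s\nu_a&-c\nu_a\nu_a^\dagger+\Pi_a\end{pmatrix}$;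 $\mathcal{A}_i=\mathcal{A}(a_i)$. *)

theory Defs
  imports "HOL-Analysis.Analysis"
begin

text \<open>Vectors live in \<open>real^'n\<close> (= R^n). The axis is a unit vector \<open>e\<close>;
  \<open>W = e\<^sup>\<perp>\<close>. Angular velocity matrices are \<open>real^'n^'n\<close>.\<close>

definition nsb_c :: "real \<Rightarrow> real" where
  "nsb_c \<gamma> = (1 - \<gamma>^2) / (1 + \<gamma>^2)"

definition nsb_s :: "real \<Rightarrow> real" where
  "nsb_s \<gamma> = 2 * \<gamma> / (1 + \<gamma>^2)"

definition outer :: "real^'n \<Rightarrow> real^'n \<Rightarrow> real^'n^'n" where
  "outer x y = (\<chi> i j. x$i * y$j)"

text \<open>\<open>(a \<wedge> b) x = (a \<bullet> x) b - (b \<bullet> x) a\<close>, i.e. the matrix \<open>b a\<^sup>\<dagger> - a b\<^sup>\<dagger>\<close>.\<close>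
definition wedge :: "real^'n \<Rightarrow> real^'n \<Rightarrow> real^'n^'n" where
  "wedge a b = outer b a - outer a b"

definition skew :: "real^'n^'n \<Rightarrow> bool" where
  "skew M \<longleftrightarrow> transpose M = - M"

definition collision_map ::
  "real \<Rightarrow> real \<Rightarrow> real^'n \<Rightarrow> (real^'n) \<times> (real^'n^'n) \<Rightarrow> (real^'n) \<times> (real^'n^'n)" where
  "collision_map \<gamma> r \<nu> uU = (case uU of (u, U) \<Rightarrow>
     (nsb_c \<gamma> *\<^sub>R u - ((nsb_s \<gamma> / \<gamma>) * (u \<bullet> \<nu>)) *\<^sub>R \<nu> + (nsb_s \<gamma> * \<gamma> * r) *\<^sub>R (U *v \<nu>),
      (nsb_s \<gamma> / (\<gamma> * r)) *\<^sub>R wedge \<nu> u + U - (nsb_s \<gamma> / \<gamma>) *\<^sub>R wedge \<nu> (U *v \<nu>)))"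

definition transv :: "real^'n \<Rightarrow> real^'n \<Rightarrow> real^'n" where
  "transv e x = x - (x \<bullet> e) *\<^sub>R e"

text \<open>\<open>\<Lambda> = (\<sigma>, w) \<in> R \<oplus> W\<close>, identified with \<open>\<sigma> e + w \<in> R^n\<close>
  (an isometric identification), where \<open>\<sigma> = u \<bullet> e\<close>, \<open>w = \<gamma> r U e\<close>.\<close>
definition Lambda_vec :: "real \<Rightarrow> real \<Rightarrow> real^'n \<Rightarrow> real^'n \<Rightarrow> real^'n^'n \<Rightarrow> real^'n" where
  "Lambda_vec \<gamma> r e u U = (u \<bullet> e) *\<^sub>R e + (\<gamma> * r) *\<^sub>R (U *v e)"

text \<open>The map \<open>\<A>(a)\<close> of \<open>R \<oplus> W \<cong> R^n\<close> with block matrix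
  \<open>((c, -s \<nu>\<^sup>\<dagger>), (-s \<nu>, -c \<nu> \<nu>\<^sup>\<dagger> + \<Pi>))\<close>, under the identification above;
  \<open>\<Pi>\<close> (projection in W onto \<open>\<nu>\<^sup>\<perp>\<close>) becomes \<open>I - e e\<^sup>\<dagger> - \<nu> \<nu>\<^sup>\<dagger>\<close>.\<close>
definition Amat :: "real \<Rightarrow> real^'n \<Rightarrow> real^'n \<Rightarrow> real^'n^'n" where
  "Amat \<gamma> e \<nu> =
     nsb_c \<gamma> *\<^sub>R outer e e - nsb_s \<gamma> *\<^sub>R outer e \<nu> - nsb_s \<gamma> *\<^sub>R outer \<nu> e
     - nsb_c \<gamma> *\<^sub>R outer \<nu> \<nu> + (mat 1 - outer e e - outer \<nu> \<nu>)"

definition orth_proj :: "(real^'n) set \<Rightarrow> real^'n \<Rightarrow> real^'n" where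
  "orth_proj S x = (THE y. y \<in> S \<and> (\<forall>z\<in>S. (x - y) \<bullet> z = 0))"

text \<open>A trajectory of the no-slip billiard in the solid cylinder with axis e
  (normal field \<open>nuf\<close>, giving the inward unit normal at collision points),
  transversely periodic of period 2, with all intercollision times equal to 1.
  \<open>a j\<close>: j-th collision point; \<open>(u j, U j)\<close>: post-collision velocities.\<close>
definition nsb_traj ::
  "real \<Rightarrow> real \<Rightarrow> real^'n \<Rightarrow> ((real^'n) \<Rightarrow> (real^'n)) \<Rightarrow>
   (nat \<Rightarrow> (real^'n)) \<Rightarrow> (nat \<Rightarrow> (real^'n)) \<Rightarrow> (nat \<Rightarrow> (real^'n^'n)) \<Rightarrow> bool" where
  "nsb_traj \<gamma> r e nuf a u U \<longleftrightarrow>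
     (\<forall>j. skew (U j)) \<and>
     (\<forall>j. a (Suc j) = a j + u j) \<and>
     (\<forall>j. (u (Suc j), U (Suc j)) = collision_map \<gamma> r (nuf (a (Suc j))) (u j, U j)) \<and>
     (\<forall>j. transv e (a (j + 2)) = transv e (a j))"

end

theory Submission
  imports Defs
begin

text \<open>Each collision matrix \<open>\<A>(a)\<close> is the reflection of \<open>R \<oplus> W \<cong> R^n\<close> in the hyperplane
  orthogonal to \<open>\<gamma> e + \<nu>\<^sub>a\<close>, so \<open>Q\<close> is a rotation. The height increases by \<open>\<sigma>\<^sub>j = e \<bullet> \<Lambda>\<^sub>j\<close>
  between collisions and \<open>\<Lambda>\<^sub>j\<^sub>+\<^sub>1 = \<A>\<^sub>j\<^sub>+\<^sub>1 \<Lambda>\<^sub>j\<close>, so over the two collisions of a period it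
  increases by \<open>e \<bullet> (I + \<A>\<^sub>1) \<Lambda>\<^sub>2\<^sub>k = \<xi> \<bullet> R\<^sup>k \<Lambda>\<^sub>0\<close>, where \<open>\<xi> = e + \<A>\<^sub>1 e\<close> (as \<open>\<A>\<^sub>1\<close> is
  symmetric) and \<open>R = \<A>\<^sub>2 \<A>\<^sub>1\<close>. For orthogonal \<open>R\<close> the orthogonal complement of the fixed space
  is the range of \<open>R - I\<close>, so \<open>\<Lambda>\<^sub>0 = P \<Lambda>\<^sub>0 + R z - z\<close> and the sum of \<open>R\<^sup>j \<Lambda>\<^sub>0\<close> over
  \<open>j < k\<close> is \<open>k P \<Lambda>\<^sub>0\<close> plus the bounded telescoping term \<open>R\<^sup>k z - z\<close>. Since both factors are
  involutions, \<open>R = \<A>\<^sub>2 \<A>\<^sub>1\<close> and \<open>Q = \<A>\<^sub>1 \<A>\<^sub>2\<close> have the same fixed space.\<close>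

lemma inner_matrix_vector_transpose:
  fixes M :: "real^'n^'m"
  shows "(M *v x) \<bullet> y = x \<bullet> (transpose M *v y)"
  by (metis dot_lmul_matrix inner_commute transpose_matrix_vector)

lemma outer_mult_vec: "outer x y *v z = (y \<bullet> z) *\<^sub>R x"
  by (simp add: outer_def matrix_vector_mult_def inner_vec_def vec_eq_iff sum_distrib_left mult_ac)

lemma wedge_mult_vec: "wedge a b *v x = (a \<bullet> x) *\<^sub>R b - (b \<bullet> x) *\<^sub>R a"
  by (simp add: wedge_def matrix_vector_mult_diff_rdistrib outer_mult_vec)

lemma skew_inner:
  assumes "skew U"
  shows "(U *v x) \<bullet> y = - (x \<bullet> (U *v y))"
proof -
  have "transpose U *v y = - (U *v y)"
    using assms by (simp add: skew_def matrix_vector_mult_def vec_eq_iff sum_negf)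
  then show ?thesis
    by (simp add: inner_matrix_vector_transpose)
qed

lemma skew_inner_self: "skew U \<Longrightarrow> x \<bullet> (U *v x) = 0"
  using skew_inner[of U x x] by (simp add: inner_commute)

lemma orthogonal_matrix_norm:
  fixes R :: "real^'n^'n"
  assumes "orthogonal_matrix R"
  shows "norm (R *v x) = norm x"
proof -
  have "(R *v x) \<bullet> (R *v x) = x \<bullet> x"
    using assms by (simp add: inner_matrix_vector_transpose matrix_vector_mul_assoc orthogonal_matrix)
  then show ?thesis
    by (simp add: norm_eq_sqrt_inner)
qed

text \<open>For \<open>w = 0\<close> this degenerates to the identity, since \<open>2 / 0 = 0\<close>.\<close>
definition reflection :: "real^'n \<Rightarrow> real^'n^'n" where
  "reflection w = mat 1 - (2 / (w \<bullet> w)) *\<^sub>R outer w w"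

lemma reflection_mult_vec: "reflection w *v x = x - (2 * (w \<bullet> x) / (w \<bullet> w)) *\<^sub>R w"
  by (simp add: reflection_def matrix_vector_mult_diff_rdistrib outer_mult_vec
      scaleR_matrix_vector_assoc[symmetric])

lemma transpose_reflection: "transpose (reflection w) = reflection w"
  by (simp add: reflection_def transpose_def mat_def outer_def vec_eq_iff mult.commute)

lemma reflection_reflection:
  assumes "w \<noteq> 0"
  shows "reflection w ** reflection w = mat 1"
proof -
  have "w \<bullet> (reflection w *v x) = - (w \<bullet> x)" for x
    using assms by (simp add: reflection_mult_vec inner_diff_right)
  then have "reflection w *v (reflection w *v x) = x" for x
    by (simp add: reflection_mult_vec[of w "reflection w *v x"]) (simp add: reflection_mult_vec)
  then show ?thesis
    by (simp add: matrix_eq matrix_vector_mul_assoc[symmetric])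
qed

lemma orthogonal_matrix_reflection: "w \<noteq> 0 \<Longrightarrow> orthogonal_matrix (reflection w)"
  by (simp add: orthogonal_matrix transpose_reflection reflection_reflection)

lemma reflection_scaleR: "c \<noteq> 0 \<Longrightarrow> reflection (c *\<^sub>R w) = reflection w"
  by (simp add: reflection_def outer_def vec_eq_iff)

lemma reflection_orthogonal_conj:
  fixes B :: "real^'n^'n"
  assumes "orthogonal_matrix B"
  shows "transpose B ** reflection w ** B = reflection (transpose B *v w)"
proof -
  let ?w' = "transpose B *v w"
  have BtB: "transpose B *v (B *v x) = x" for x
    using assms by (simp add: matrix_vector_mul_assoc orthogonal_matrix)
  have "w \<bullet> w = ?w' \<bullet> ?w'"
    using orthogonal_matrix_norm[of "transpose B" w] assms by (simp add: dot_square_norm)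
  moreover have "w \<bullet> (B *v x) = ?w' \<bullet> x" for x
    by (metis inner_commute inner_matrix_vector_transpose)
  ultimately have "transpose B *v (reflection w *v (B *v x)) = reflection ?w' *v x" for x
    by (simp only: reflection_mult_vec matrix_vector_mult_diff_distrib matrix_vector_mult_scaleR BtB)
  then show ?thesis
    unfolding matrix_eq by (simp add: matrix_vector_mul_assoc[symmetric] del: transpose_matrix_vector)
qed

lemma det_reflection:
  fixes w :: "real^'n"
  assumes "w \<noteq> 0"
  shows "det (reflection w) = -1"
proof -
  define u where "u = w /\<^sub>R norm w"
  have "reflection u = reflection w"
    using assms by (simp add: u_def reflection_scaleR)
  have "norm u = 1"
    using assms by (simp add: u_def)
  fix k :: 'n
  obtain B where B: "orthogonal_matrix B" "B *v axis k 1 = u"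
    using orthogonal_matrix_exists_basis[OF \<open>norm u = 1\<close>] by metis
  then have "transpose B *v u = axis k 1"
    by (metis matrix_vector_mul_assoc matrix_vector_mul_lid orthogonal_matrix)
  then have conj: "transpose B ** reflection u ** B = reflection (axis k 1)"
    using reflection_orthogonal_conj[OF B(1)] by simp
  have diag: "(reflection (axis k 1) :: real^'n^'n) $ i $ j = (if i = j then if i = k then -1 else 1 else 0)"
    for i j
    by (simp add: reflection_def mat_def outer_def inner_axis_axis) (simp add: axis_def)
  have "det (reflection (axis k 1) :: real^'n^'n) = (\<Prod>i\<in>UNIV. if i = k then -1 else 1)"
    by (subst det_diagonal) (simp_all add: diag)
  also have "\<dots> = -1"
    by (simp add: prod.delta)
  finally have "det (transpose B) * det (reflection u) * det B = -1"
    by (metis conj det_mul)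
  then have "(det B * det B) * det (reflection u) = -1"
    by (simp add: algebra_simps)
  moreover have "det B * det B = 1"
    using det_orthogonal_matrix[OF B(1)] by auto
  ultimately show ?thesis
    using \<open>reflection u = reflection w\<close> by simp
qed

lemma nsb_s_eq: "nsb_s \<gamma> = \<gamma> * (1 + nsb_c \<gamma>)"
proof -
  have "1 + \<gamma>\<^sup>2 \<noteq> 0"
    using zero_le_power2[of \<gamma>] by linarith
  then show ?thesis
    by (simp add: nsb_c_def nsb_s_def field_simps)
qed

lemma Amat_mult_vec:
  "Amat \<gamma> e \<nu> *v x = x + ((nsb_c \<gamma> - 1) * (e \<bullet> x) - nsb_s \<gamma> * (\<nu> \<bullet> x)) *\<^sub>R e
     - (nsb_s \<gamma> * (e \<bullet> x) + (1 + nsb_c \<gamma>) * (\<nu> \<bullet> x)) *\<^sub>R \<nu>"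
  by (simp add: Amat_def matrix_vector_mult_diff_rdistrib matrix_vector_mult_add_rdistrib
      outer_mult_vec scaleR_matrix_vector_assoc[symmetric] algebra_simps)

lemma Amat_eq_reflection:
  assumes e: "norm e = 1" and \<nu>: "norm \<nu> = 1" and \<nu>e: "\<nu> \<bullet> e = 0"
  shows "Amat \<gamma> e \<nu> = reflection (\<gamma> *\<^sub>R e + \<nu>)"
proof -
  let ?w = "\<gamma> *\<^sub>R e + \<nu>"
  have "e \<bullet> e = 1" "\<nu> \<bullet> \<nu> = 1" "e \<bullet> \<nu> = 0"
    using e \<nu> \<nu>e by (simp_all add: norm_eq_1 inner_commute)
  then have ww: "?w \<bullet> ?w = 1 + \<gamma>\<^sup>2"
    using \<nu>e by (simp add: inner_add_left inner_add_right power2_eq_square)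
  have "Amat \<gamma> e \<nu> *v x = reflection ?w *v x" for x
  proof -
    define k where "k = 2 * (\<gamma> * (e \<bullet> x) + \<nu> \<bullet> x) / (1 + \<gamma>\<^sup>2)"
    have pos: "1 + \<gamma>\<^sup>2 \<noteq> 0"
      using zero_le_power2[of \<gamma>] by linarith
    have "(nsb_c \<gamma> - 1) * (e \<bullet> x) - nsb_s \<gamma> * (\<nu> \<bullet> x) = - k * \<gamma>"
      "nsb_s \<gamma> * (e \<bullet> x) + (1 + nsb_c \<gamma>) * (\<nu> \<bullet> x) = k"
      using pos by (simp_all add: k_def nsb_c_def nsb_s_def divide_simps) (simp_all add: algebra_simps power2_eq_square)
    moreover have "?w \<bullet> x = \<gamma> * (e \<bullet> x) + \<nu> \<bullet> x"
      by (simp add: inner_add_left)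
    then have "reflection ?w *v x = x - k *\<^sub>R ?w"
      by (simp only: reflection_mult_vec ww k_def)
    then have "reflection ?w *v x = x - (k * \<gamma>) *\<^sub>R e - k *\<^sub>R \<nu>"
      by (simp add: scaleR_add_right)
    ultimately show ?thesis
      by (simp add: Amat_mult_vec)
  qed
  then show ?thesis
    by (simp add: matrix_eq)
qed

lemma Amat_properties:
  assumes "norm e = 1" "norm \<nu> = 1" "\<nu> \<bullet> e = 0"
  shows orthogonal_matrix_Amat: "orthogonal_matrix (Amat \<gamma> e \<nu>)"
    and det_Amat: "det (Amat \<gamma> e \<nu>) = -1"
    and Amat_Amat: "Amat \<gamma> e \<nu> ** Amat \<gamma> e \<nu> = mat 1"
    and transpose_Amat: "transpose (Amat \<gamma> e \<nu>) = Amat \<gamma> e \<nu>"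
proof -
  have "\<nu> \<bullet> (\<gamma> *\<^sub>R e + \<nu>) = 1"
    using assms by (simp add: inner_add_right inner_commute dot_square_norm)
  then have "\<gamma> *\<^sub>R e + \<nu> \<noteq> 0"
    by auto
  then show "orthogonal_matrix (Amat \<gamma> e \<nu>)" "det (Amat \<gamma> e \<nu>) = -1"
    "Amat \<gamma> e \<nu> ** Amat \<gamma> e \<nu> = mat 1" "transpose (Amat \<gamma> e \<nu>) = Amat \<gamma> e \<nu>"
    by (simp_all add: Amat_eq_reflection[OF assms] orthogonal_matrix_reflection det_reflection
        reflection_reflection transpose_reflection)
qed

lemma inner_Lambda_vec_axis:
  assumes "skew U" "norm e = 1"
  shows "e \<bullet> Lambda_vec \<gamma> r e u U = u \<bullet> e"
  using assms skew_inner_self[of U e]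
  by (simp add: Lambda_vec_def inner_add_right dot_square_norm)

lemma Lambda_vec_collision:
  assumes "\<gamma> \<noteq> 0" "r \<noteq> 0" and e: "norm e = 1" and \<nu>e: "\<nu> \<bullet> e = 0" and "skew U"
  shows "Lambda_vec \<gamma> r e (fst (collision_map \<gamma> r \<nu> (u, U))) (snd (collision_map \<gamma> r \<nu> (u, U)))
    = Amat \<gamma> e \<nu> *v Lambda_vec \<gamma> r e u U"
proof -
  let ?c = "nsb_c \<gamma>" and ?s = "nsb_s \<gamma>"
  define \<sigma> where "\<sigma> = u \<bullet> e"
  define W where "W = U *v e"
  define \<beta> where "\<beta> = \<nu> \<bullet> W"
  have s_div: "?s / \<gamma> = 1 + ?c"
    using \<open>\<gamma> \<noteq> 0\<close> by (simp add: nsb_s_eq)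
  have Une: "(U *v \<nu>) \<bullet> e = - \<beta>"
    using skew_inner[OF \<open>skew U\<close>, of \<nu> e] by (simp add: \<beta>_def W_def)
  have L: "Lambda_vec \<gamma> r e u U = \<sigma> *\<^sub>R e + (\<gamma> * r) *\<^sub>R W"
    by (simp add: Lambda_vec_def \<sigma>_def W_def)
  have "e \<bullet> W = 0"
    using skew_inner_self[OF \<open>skew U\<close>] by (simp add: W_def)
  then have eL: "e \<bullet> Lambda_vec \<gamma> r e u U = \<sigma>" and \<nu>L: "\<nu> \<bullet> Lambda_vec \<gamma> r e u U = \<gamma> * r * \<beta>"
    using e \<nu>e by (simp_all add: L inner_add_right dot_square_norm \<beta>_def)
  define u' where "u' = fst (collision_map \<gamma> r \<nu> (u, U))"
  define U' where "U' = snd (collision_map \<gamma> r \<nu> (u, U))"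
  have "u' \<bullet> e = ?c * \<sigma> - ?s * \<gamma> * r * \<beta>"
    using \<nu>e by (simp add: u'_def collision_map_def inner_add_left inner_diff_left Une \<sigma>_def)
  moreover have "U' *v e = W - (?s / (\<gamma> * r) * \<sigma> + ?s / \<gamma> * \<beta>) *\<^sub>R \<nu>"
    using \<nu>e by (simp add: U'_def collision_map_def matrix_vector_mult_diff_rdistrib
        matrix_vector_mult_add_rdistrib scaleR_matrix_vector_assoc[symmetric] wedge_mult_vec Une
        W_def \<sigma>_def algebra_simps)
  ultimately have "Lambda_vec \<gamma> r e u' U' = (?c * \<sigma> - ?s * \<gamma> * r * \<beta>) *\<^sub>R e + (\<gamma> * r) *\<^sub>R W
      - (\<gamma> * r * (?s / (\<gamma> * r) * \<sigma> + ?s / \<gamma> * \<beta>)) *\<^sub>R \<nu>"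
    by (simp add: Lambda_vec_def scaleR_diff_right)
  also have "\<gamma> * r * (?s / (\<gamma> * r) * \<sigma> + ?s / \<gamma> * \<beta>) = ?s * \<sigma> + (1 + ?c) * (\<gamma> * r * \<beta>)"
    using assms(1,2) s_div by (simp add: field_simps)
  also have "(?c * \<sigma> - ?s * \<gamma> * r * \<beta>) *\<^sub>R e + (\<gamma> * r) *\<^sub>R W - (?s * \<sigma> + (1 + ?c) * (\<gamma> * r * \<beta>)) *\<^sub>R \<nu>
      = Amat \<gamma> e \<nu> *v Lambda_vec \<gamma> r e u U"
    unfolding Amat_mult_vec eL \<nu>L by (simp add: L algebra_simps)
  finally show ?thesis
    by (simp only: u'_def U'_def)
qed

lemma orth_proj_eqI:
  assumes S: "subspace S" and "y \<in> S" and "x - y \<in> S\<^sup>\<bottom>"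
  shows "orth_proj S x = y"
  unfolding orth_proj_def
proof (rule the_equality)
  show "y \<in> S \<and> (\<forall>z\<in>S. (x - y) \<bullet> z = 0)"
    using assms by (simp add: orthogonal_comp_def orthogonal_def inner_commute)
next
  fix y' assume y': "y' \<in> S \<and> (\<forall>z\<in>S. (x - y') \<bullet> z = 0)"
  then have "x - y' \<in> S\<^sup>\<bottom>"
    by (simp add: orthogonal_comp_def orthogonal_def inner_commute)
  then have "(x - y') - (x - y) \<in> S\<^sup>\<bottom>"
    using assms(3) by (rule subspace_diff[OF subspace_orthogonal_comp])
  moreover have "y - y' \<in> S"
    using assms y' by (simp add: subspace_diff)
  ultimately have "y - y' \<in> S \<inter> S\<^sup>\<bottom>"
    by (simp add: algebra_simps)
  then show "y' = y"
    using orthogonal_Int_0[OF S] by simp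
qed

lemma orth_proj_in_orthogonal_comp:
  fixes S :: "(real^'n) set"
  assumes "subspace S"
  shows "orth_proj S x \<in> S" "x - orth_proj S x \<in> S\<^sup>\<bottom>"
proof -
  obtain y z where "y \<in> S" "z \<in> S\<^sup>\<bottom>" "x = y + z"
    using subspace_sum_orthogonal_comp[OF assms] set_plus_elim by (metis UNIV_I)
  then have "orth_proj S x = y"
    by (simp add: orth_proj_eqI[OF assms])
  with \<open>y \<in> S\<close> \<open>z \<in> S\<^sup>\<bottom>\<close> \<open>x = y + z\<close>
  show "orth_proj S x \<in> S" "x - orth_proj S x \<in> S\<^sup>\<bottom>"
    by simp_all
qed

lemma orth_proj_id: "subspace S \<Longrightarrow> x \<in> S \<Longrightarrow> orth_proj S x = x"
  by (simp add: orth_proj_eqI subspace_0 subspace_orthogonal_comp)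

lemma linear_orth_proj:
  fixes S :: "(real^'n) set"
  assumes S: "subspace S"
  shows "linear (orth_proj S)"
proof (rule linearI)
  note P = orth_proj_in_orthogonal_comp[OF S]
  have S': "subspace (S\<^sup>\<bottom>)"
    by (rule subspace_orthogonal_comp)
  show "orth_proj S (x + y) = orth_proj S x + orth_proj S y" for x y
  proof (rule orth_proj_eqI[OF S])
    show "orth_proj S x + orth_proj S y \<in> S"
      using P S by (simp add: subspace_add)
    have "x + y - (orth_proj S x + orth_proj S y) = (x - orth_proj S x) + (y - orth_proj S y)"
      by simp
    then show "x + y - (orth_proj S x + orth_proj S y) \<in> S\<^sup>\<bottom>"
      using P S' by (metis subspace_add)
  qed
  show "orth_proj S (c *\<^sub>R x) = c *\<^sub>R orth_proj S x" for c x
  proof (rule orth_proj_eqI[OF S])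
    show "c *\<^sub>R orth_proj S x \<in> S"
      using P S by (simp add: subspace_scale)
    show "c *\<^sub>R x - c *\<^sub>R orth_proj S x \<in> S\<^sup>\<bottom>"
      using P S' by (metis scaleR_right_diff_distrib subspace_scale)
  qed
qed

lemma subspace_fixed_points: "subspace {x. (M :: real^'n^'n) *v x = x}"
  by (simp add: subspace_def matrix_vector_right_distrib matrix_vector_mult_scaleR)

lemma mult_involutions_fixed_iff:
  assumes "A ** A = mat 1" "B ** B = mat 1"
  shows "(A ** B) *v x = x \<longleftrightarrow> (B ** A) *v x = x"
proof -
  have A: "A *v (A *v y) = y" and B: "B *v (B *v y) = y" for y
    using assms by (simp_all add: matrix_vector_mul_assoc)
  have "A *v (B *v x) = x \<longleftrightarrow> B *v x = A *v x"
    using A[of "B *v x"] A[of x] by (metis (no_types))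
  also have "\<dots> \<longleftrightarrow> B *v (A *v x) = x"
    using B[of "A *v x"] B[of x] by (metis (no_types))
  finally show ?thesis
    by (simp add: matrix_vector_mul_assoc)
qed

lemma orthogonal_comp_fixed_points:
  fixes R :: "real^'n^'n"
  assumes "orthogonal_matrix R"
  shows "{x. R *v x = x}\<^sup>\<bottom> = range (\<lambda>z. R *v z - z)"
proof -
  let ?f = "\<lambda>x. (R - mat 1) *v x"
  have "{x. R *v x = x} = (\<lambda>x. transpose (R - mat 1) *v x) -` {0}"
  proof -
    have "transpose R *v x = x \<longleftrightarrow> R *v x = x" for x
      using assms unfolding orthogonal_matrix_def
      by (metis matrix_vector_mul_assoc matrix_vector_mul_lid)
    moreover have "transpose (R - mat 1) = transpose R - mat 1"
      by (simp add: transpose_def mat_def vec_eq_iff)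
    ultimately show ?thesis
      by (simp add: set_eq_iff matrix_vector_mult_diff_rdistrib del: transpose_matrix_vector)
  qed
  also have "\<dots> = (range ?f)\<^sup>\<bottom>"
    using ker_orthogonal_comp_adjoint[OF matrix_vector_mul_linear[of "transpose (R - mat 1)"]]
    by (simp add: adjoint_matrix del: transpose_matrix_vector)
  finally have "{x. R *v x = x}\<^sup>\<bottom> = (range ?f)\<^sup>\<bottom>\<^sup>\<bottom>"
    by simp
  also have "\<dots> = range ?f"
    by (simp add: orthogonal_comp_self subspace_UNIV linear_subspace_image matrix_vector_mul_linear)
  finally show ?thesis
    by (simp add: matrix_vector_mult_diff_rdistrib)
qed

lemma orthogonal_matrix_orbit_norm:
  fixes R :: "real^'n^'n"
  assumes "orthogonal_matrix R" and "\<And>k. v (Suc k) = R *v v k"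
  shows "norm (v k) = norm (v 0)"
  by (induction k) (simp_all add: assms orthogonal_matrix_norm)

lemma orthogonal_matrix_orbit_sum_bounded:
  fixes R :: "real^'n^'n"
  assumes R: "orthogonal_matrix R" and v: "\<And>k. v (Suc k) = R *v v k"
  shows "bounded (range (\<lambda>k. (\<Sum>j<k. v j) - real k *\<^sub>R orth_proj {x. R *v x = x} (v 0)))"
proof -
  define p where "p = orth_proj {x. R *v x = x} (v 0)"
  have "R *v p = p" and "v 0 - p \<in> {x. R *v x = x}\<^sup>\<bottom>"
    using orth_proj_in_orthogonal_comp[OF subspace_fixed_points] by (simp_all add: p_def)
  then obtain z where "v 0 - p = R *v z - z"
    using orthogonal_comp_fixed_points[OF R] by auto
  then have z: "v 0 = p + (R *v z - z)"
    by (simp add: algebra_simps)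
  define Z where "Z k = ((*v) R ^^ k) z" for k
  have Z_Suc: "Z (Suc k) = R *v Z k" for k
    by (simp add: Z_def)
  have v_eq: "v k = p + (Z (Suc k) - Z k)" for k
  proof (induction k)
    case 0
    show ?case using z by (simp add: Z_def)
  next
    case (Suc k)
    then show ?case
      by (simp add: v Z_Suc \<open>R *v p = p\<close> matrix_vector_right_distrib matrix_vector_mult_diff_distrib)
  qed
  have sum_eq: "(\<Sum>j<k. v j) - real k *\<^sub>R p = Z k - z" for k
    by (induction k) (simp_all add: v_eq Z_def algebra_simps)
  have "norm (Z k - z) \<le> 2 * norm z" for k
    using norm_triangle_ineq4[of "Z k" z] orthogonal_matrix_orbit_norm[of R Z, OF R Z_Suc]
    by (simp add: Z_def)
  then show ?thesis
    unfolding bounded_iff p_def[symmetric] sum_eq by blast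
qed

lemma bounded_range_even_odd:
  assumes "bounded (range (\<lambda>k. f (2 * k)))" "bounded (range (\<lambda>k. f (Suc (2 * k))))"
  shows "bounded (range f)"
proof -
  have "f l \<in> range (\<lambda>k. f (2 * k)) \<union> range (\<lambda>k. f (Suc (2 * k)))" for l
  proof -
    have "l = 2 * (l div 2) \<or> l = Suc (2 * (l div 2))"
      by presburger
    then show ?thesis
      by (metis UnI1 UnI2 rangeI)
  qed
  then have "range f \<subseteq> range (\<lambda>k. f (2 * k)) \<union> range (\<lambda>k. f (Suc (2 * k)))"
    by blast
  moreover have "bounded (range (\<lambda>k. f (2 * k)) \<union> range (\<lambda>k. f (Suc (2 * k))))"
    using assms by simp
  ultimately show ?thesis
    by (rule bounded_subset[rotated])
qed

lemma alternating_orbit_height_bounded: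
  fixes A B :: "real^'n^'n" and L :: "nat \<Rightarrow> real^'n" and h :: "nat \<Rightarrow> real"
  assumes R: "orthogonal_matrix (B ** A)"
    and h: "\<And>j. h (Suc j) = h j + e \<bullet> L j"
    and L_odd: "\<And>k. L (Suc (2 * k)) = A *v L (2 * k)"
    and L_even: "\<And>k. L (Suc (Suc (2 * k))) = B *v L (Suc (2 * k))"
  shows "bounded (range (\<lambda>l. h l - real (l div 2) *
    ((e + transpose A *v e) \<bullet> orth_proj {x. (B ** A) *v x = x} (L 0))))"
proof -
  define \<xi> where "\<xi> = e + transpose A *v e"
  define p where "p = orth_proj {x. (B ** A) *v x = x} (L 0)"
  define v where "v k = L (2 * k)" for k
  let ?hhat = "\<lambda>l. h l - real (l div 2) * (\<xi> \<bullet> p)"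
  have v_Suc: "v (Suc k) = (B ** A) *v v k" for k
    by (simp add: v_def L_odd L_even matrix_vector_mul_assoc[symmetric])
  have h_even: "h (2 * k) = h 0 + \<xi> \<bullet> (\<Sum>j<k. v j)" for k
  proof (induction k)
    case (Suc k)
    have "e \<bullet> (A *v v k) = (transpose A *v e) \<bullet> v k"
      by (metis inner_commute inner_matrix_vector_transpose)
    then have "h (2 * Suc k) = h (2 * k) + \<xi> \<bullet> v k"
      by (simp add: h L_odd v_def \<xi>_def inner_add_left)
    then show ?case
      using Suc by (simp add: inner_add_right)
  qed simp
  have "bounded (range (\<lambda>k. (\<Sum>j<k. v j) - real k *\<^sub>R p))"
    using orthogonal_matrix_orbit_sum_bounded[of "B ** A" v, OF R v_Suc] by (simp add: p_def v_def)
  from bounded_linear_image[OF this bounded_linear_inner_right[of \<xi>]]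
  have "bounded (range (\<lambda>k. h 0 + \<xi> \<bullet> ((\<Sum>j<k. v j) - real k *\<^sub>R p)))"
    by (intro bounded_plus_comp) (simp_all add: image_image)
  then have even: "bounded (range (\<lambda>k. ?hhat (2 * k)))"
    by (simp add: h_even inner_diff_right add_diff_eq)
  have "norm (v k) \<le> norm (v 0)" for k
    by (rule eq_refl[OF orthogonal_matrix_orbit_norm[of "B ** A" v, OF R v_Suc]])
  then have "bounded (range v)"
    unfolding bounded_iff by blast
  from bounded_linear_image[OF this bounded_linear_inner_right[of e]]
  have "bounded (range (\<lambda>k. e \<bullet> v k))"
    by (simp add: image_image)
  with even have "bounded (range (\<lambda>k. ?hhat (Suc (2 * k))))"
    using bounded_plus_comp[of "\<lambda>k. ?hhat (2 * k)" UNIV "\<lambda>k. e \<bullet> v k"] by (simp add: h v_def algebra_simps)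
  with even show ?thesis
    unfolding \<xi>_def p_def by (rule bounded_range_even_odd)
qed

lemma drift_tendsto:
  fixes h :: "nat \<Rightarrow> real"
  assumes "bounded (range (\<lambda>l. h l - real (l div 2) * \<kappa>))"
  shows "(\<lambda>l. h l / real l) \<longlonglongrightarrow> \<kappa> / 2"
proof -
  obtain G where G: "\<And>l. \<bar>h l - real (l div 2) * \<kappa>\<bar> \<le> G"
    using assms unfolding bounded_iff by auto
  have "\<bar>h l / real l - \<kappa> / 2\<bar> \<le> (G + \<bar>\<kappa>\<bar>) / real l" if "l > 0" for l
  proof -
    have "\<bar>real l / 2 - real (l div 2)\<bar> \<le> 1"
      by linarith
    then have "\<bar>(real l / 2 - real (l div 2)) * \<kappa>\<bar> \<le> \<bar>\<kappa>\<bar>"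
      by (simp add: abs_mult mult_left_le_one_le)
    then have "\<bar>h l - real l * (\<kappa> / 2)\<bar> \<le> G + \<bar>\<kappa>\<bar>"
      using G[of l] by (simp add: algebra_simps)
    then show ?thesis
      using that by (simp add: divide_simps abs_divide) (simp add: algebra_simps)
  qed
  then have "(\<lambda>l. h l / real l - \<kappa> / 2) \<longlonglongrightarrow> 0"
    by (intro Lim_null_comparison[OF _ lim_const_over_n[of "G + \<bar>\<kappa>\<bar>"]])
      (auto intro: eventually_sequentiallyI[of 1])
  then show ?thesis
    by (simp add: LIM_zero_iff)
qed

lemma drift_unbounded:
  fixes h :: "nat \<Rightarrow> real"
  assumes "bounded (range (\<lambda>l. h l - real (l div 2) * \<kappa>))" and "\<kappa> \<noteq> 0"
  shows "\<not> bounded (range h)"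
proof
  assume "bounded (range h)"
  then have "(\<lambda>l. h l / real l) \<longlonglongrightarrow> 0 / 2"
    by (intro drift_tendsto) simp
  with drift_tendsto[OF assms(1)] have "\<kappa> / 2 = 0 / 2"
    by (rule LIMSEQ_unique)
  with \<open>\<kappa> \<noteq> 0\<close> show False
    by simp
qed

lemma two_periodic_eq:
  fixes f :: "nat \<Rightarrow> 'a"
  assumes "\<And>j. f (j + 2) = f j"
  shows "f (2 * k + i) = f i"
proof (induction k)
  case (Suc k)
  have "2 * Suc k + i = (2 * k + i) + 2"
    by simp
  then show ?case
    using Suc assms by simp
qed simp

lemma bounded_range_axis_transv:
  assumes "norm e = 1" "bounded (range (\<lambda>l. transv e (a l)))" "bounded (range (\<lambda>l. a l \<bullet> e))"
  shows "bounded (range a)"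
proof -
  obtain B1 B2 where B1: "\<And>l. norm (transv e (a l)) \<le> B1" and B2: "\<And>l. \<bar>a l \<bullet> e\<bar> \<le> B2"
    using assms(2,3) unfolding bounded_iff by auto
  have "a l = transv e (a l) + (a l \<bullet> e) *\<^sub>R e" for l
    by (simp add: transv_def)
  then have "norm (a l) \<le> norm (transv e (a l)) + \<bar>a l \<bullet> e\<bar>" for l
    using norm_triangle_ineq[of "transv e (a l)" "(a l \<bullet> e) *\<^sub>R e"] assms(1) by simp
  then have "norm (a l) \<le> B1 + B2" for l
    using B1[of l] B2[of l] by (smt (verit))
  then show ?thesis
    unfolding bounded_iff by blast
qed

locale cylinder_billiard =
  fixes \<gamma> r :: real and e :: "real^'n" and nuf :: "real^'n \<Rightarrow> real^'n"
  assumes gamma_nonzero: "\<gamma> \<noteq> 0" and r_nonzero: "r \<noteq> 0" and e_unit: "norm e = 1"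
    and nuf_orthogonal: "nuf x \<bullet> e = 0" and nuf_unit: "norm (nuf x) = 1"
    and nuf_axial: "nuf (x + t *\<^sub>R e) = nuf x"
begin

lemma nuf_eq_if_transv_eq: "transv e x = transv e y \<Longrightarrow> nuf x = nuf y"
  using nuf_axial[of x "- (x \<bullet> e)"] nuf_axial[of y "- (y \<bullet> e)"] by (simp add: transv_def)

context
  fixes a u :: "nat \<Rightarrow> real^'n" and U :: "nat \<Rightarrow> real^'n^'n"
  assumes traj: "nsb_traj \<gamma> r e nuf a u U"
begin

lemma traj_skew: "skew (U j)"
  and traj_position_Suc: "a (Suc j) = a j + u j"
  and traj_collision: "(u (Suc j), U (Suc j)) = collision_map \<gamma> r (nuf (a (Suc j))) (u j, U j)"
  and traj_transv_periodic: "transv e (a (j + 2)) = transv e (a j)"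
  using traj unfolding nsb_traj_def by blast+

lemma traj_normal_periodic: "nuf (a (2 * k + i)) = nuf (a i)"
proof (rule two_periodic_eq)
  show "nuf (a (j + 2)) = nuf (a j)" for j
    using traj_transv_periodic by (rule nuf_eq_if_transv_eq)
qed

lemma traj_transv_bounded: "bounded (range (\<lambda>l. transv e (a l)))"
proof (rule bounded_range_even_odd)
  have "transv e (a (2 * k)) = transv e (a 0)" "transv e (a (Suc (2 * k))) = transv e (a 1)" for k
    using two_periodic_eq[of "\<lambda>j. transv e (a j)", OF traj_transv_periodic, of k 0]
      two_periodic_eq[of "\<lambda>j. transv e (a j)", OF traj_transv_periodic, of k 1]
    by simp_all
  then show "bounded (range (\<lambda>k. transv e (a (2 * k))))"
    "bounded (range (\<lambda>k. transv e (a (Suc (2 * k)))))"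
    by simp_all
qed

lemma traj_Lambda_Suc:
  "Lambda_vec \<gamma> r e (u (Suc j)) (U (Suc j)) = Amat \<gamma> e (nuf (a (Suc j))) *v Lambda_vec \<gamma> r e (u j) (U j)"
proof -
  have "u (Suc j) = fst (collision_map \<gamma> r (nuf (a (Suc j))) (u j, U j))"
    "U (Suc j) = snd (collision_map \<gamma> r (nuf (a (Suc j))) (u j, U j))"
    using arg_cong[OF traj_collision, of fst] arg_cong[OF traj_collision, of snd] by simp_all
  then show ?thesis
    using Lambda_vec_collision[OF gamma_nonzero r_nonzero e_unit nuf_orthogonal traj_skew]
    by simp
qed

lemma traj_height_Suc: "a (Suc j) \<bullet> e = a j \<bullet> e + e \<bullet> Lambda_vec \<gamma> r e (u j) (U j)"
  using inner_Lambda_vec_axis[OF traj_skew e_unit] by (simp add: traj_position_Suc inner_add_left)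

lemma traj_height_drift_bounded:
  "bounded (range (\<lambda>l. a l \<bullet> e - real (l div 2) *
     (((1 + nsb_c \<gamma>) *\<^sub>R e - nsb_s \<gamma> *\<^sub>R nuf (a 1)) \<bullet>
      orth_proj {x. (Amat \<gamma> e (nuf (a 1)) ** Amat \<gamma> e (nuf (a 2))) *v x = x}
        (Lambda_vec \<gamma> r e (u 0) (U 0)))))"
proof -
  note Amat_facts = Amat_properties[OF e_unit nuf_unit nuf_orthogonal]
  define A1 where "A1 = Amat \<gamma> e (nuf (a 1))"
  define A2 where "A2 = Amat \<gamma> e (nuf (a 2))"
  have "e + transpose A1 *v e = (1 + nsb_c \<gamma>) *\<^sub>R e - nsb_s \<gamma> *\<^sub>R nuf (a 1)"
    using e_unit nuf_orthogonal[of "a 1"]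
    by (simp add: A1_def Amat_facts Amat_mult_vec
        dot_square_norm algebra_simps del: transpose_matrix_vector)
  moreover have "{x. (A2 ** A1) *v x = x} = {x. (A1 ** A2) *v x = x}"
    using mult_involutions_fixed_iff[of A1 A2] by (simp add: A1_def A2_def Amat_facts)
  moreover have "bounded (range (\<lambda>l. a l \<bullet> e - real (l div 2) *
      ((e + transpose A1 *v e) \<bullet> orth_proj {x. (A2 ** A1) *v x = x} (Lambda_vec \<gamma> r e (u 0) (U 0)))))"
  proof (rule alternating_orbit_height_bounded)
    show "orthogonal_matrix (A2 ** A1)"
      by (simp add: A1_def A2_def Amat_facts orthogonal_matrix_mul)
  qed (use traj_height_Suc traj_Lambda_Suc traj_normal_periodic[of _ 1] traj_normal_periodic[of _ 2] in
      \<open>simp_all add: A1_def A2_def\<close>)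
  ultimately show ?thesis
    by (simp add: A1_def A2_def del: transpose_matrix_vector)
qed

end

end

theorem theorem5p2:
  fixes \<gamma> r :: real and e :: "real^'n" and nuf :: "(real^'n) \<Rightarrow> (real^'n)"
    and a u :: "nat \<Rightarrow> (real^'n)" and U :: "nat \<Rightarrow> (real^'n^'n)"
    and Q :: "real^'n^'n" and \<xi> :: "real^'n" and P :: "(real^'n) \<Rightarrow> (real^'n)"
  assumes gamma_pos: "\<gamma> > 0" and r_pos: "r > 0" and e_unit: "norm e = 1"
    and nuf: "\<forall>x. nuf x \<bullet> e = 0 \<and> norm (nuf x) = 1 \<and> (\<forall>t. nuf (x + t *\<^sub>R e) = nuf x)"
    and traj: "nsb_traj \<gamma> r e nuf a u U"
    and h0: "a 0 \<bullet> e = 0"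
  defines "Q \<equiv> Amat \<gamma> e (nuf (a 1)) ** Amat \<gamma> e (nuf (a 2))"
    and "\<xi> \<equiv> (1 + nsb_c \<gamma>) *\<^sub>R e - nsb_s \<gamma> *\<^sub>R nuf (a 1)"
    and "P \<equiv> orth_proj {x. Q *v x = x}"
  shows "(orthogonal_matrix Q \<and> det Q = 1)
    \<and> (\<exists>hhat :: nat \<Rightarrow> real. bounded (range hhat) \<and>
         (\<forall>l. a l \<bullet> e = hhat l + real (l div 2) * (\<xi> \<bullet> P (Lambda_vec \<gamma> r e (u 0) (U 0)))))
    \<and> ((\<lambda>l. (a l \<bullet> e) / real l) \<longlonglongrightarrow> (1/2) * (\<xi> \<bullet> P (Lambda_vec \<gamma> r e (u 0) (U 0))))
    \<and> ((\<forall>x. Q *v x = x \<longrightarrow> x = 0) \<longrightarrow> bounded (range a))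
    \<and> ((\<exists>x. Q *v x = x \<and> \<xi> \<bullet> x \<noteq> 0) \<longrightarrow>
         (\<exists>H :: (real^'n) set. subspace H \<and> H \<noteq> UNIV \<and>
            (\<forall>a' u' U'. nsb_traj \<gamma> r e nuf a' u' U' \<and> a' 0 \<bullet> e = 0
               \<and> (\<forall>j. transv e (a' j) = transv e (a j))
               \<and> Lambda_vec \<gamma> r e (u' 0) (U' 0) \<notin> H
               \<longrightarrow> \<not> bounded (range a'))))"
proof -
  interpret cylinder_billiard \<gamma> r e nuf
    using gamma_pos r_pos e_unit nuf by unfold_locales auto
  define \<kappa> where "\<kappa> = \<xi> \<bullet> P (Lambda_vec \<gamma> r e (u 0) (U 0))"
  have fixed_Q: "subspace {x. Q *v x = x}"
    by (rule subspace_fixed_points)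
  have drift: "bounded (range (\<lambda>l. a' l \<bullet> e - real (l div 2) * (\<xi> \<bullet> P (Lambda_vec \<gamma> r e (u' 0) (U' 0)))))"
    if "nsb_traj \<gamma> r e nuf a' u' U'" "\<forall>j. transv e (a' j) = transv e (a j)" for a' u' U'
  proof -
    have "nuf (a' j) = nuf (a j)" for j
      using that(2) by (intro nuf_eq_if_transv_eq) simp
    then show ?thesis
      using traj_height_drift_bounded[OF that(1)] by (simp add: Q_def \<xi>_def P_def)
  qed
  have "orthogonal_matrix Q \<and> det Q = 1"
    using Amat_properties[OF e_unit nuf_unit nuf_orthogonal]
    by (simp add: Q_def orthogonal_matrix_mul det_mul)
  moreover have "\<exists>hhat. bounded (range hhat) \<and> (\<forall>l. a l \<bullet> e = hhat l + real (l div 2) * \<kappa>)"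
    using drift[OF traj] by (intro exI[of _ "\<lambda>l. a l \<bullet> e - real (l div 2) * \<kappa>"]) (simp add: \<kappa>_def)
  moreover have "(\<lambda>l. (a l \<bullet> e) / real l) \<longlonglongrightarrow> 1 / 2 * \<kappa>"
    using drift_tendsto[OF drift[OF traj]] by (simp add: \<kappa>_def)
  moreover have "bounded (range a)" if "\<forall>x. Q *v x = x \<longrightarrow> x = 0"
  proof -
    have "P (Lambda_vec \<gamma> r e (u 0) (U 0)) \<in> {x. Q *v x = x}"
      unfolding P_def by (rule orth_proj_in_orthogonal_comp(1)[OF fixed_Q])
    then have "\<kappa> = 0"
      using that by (auto simp: \<kappa>_def)
    then show ?thesis
      using bounded_range_axis_transv[OF e_unit traj_transv_bounded[OF traj]] drift[OF traj]
      by (simp add: \<kappa>_def)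
  qed
  moreover have "\<exists>H. subspace H \<and> H \<noteq> UNIV \<and>
      (\<forall>a' u' U'. nsb_traj \<gamma> r e nuf a' u' U' \<and> a' 0 \<bullet> e = 0 \<and> (\<forall>j. transv e (a' j) = transv e (a j))
        \<and> Lambda_vec \<gamma> r e (u' 0) (U' 0) \<notin> H \<longrightarrow> \<not> bounded (range a'))"
    if "Q *v x\<^sub>0 = x\<^sub>0" "\<xi> \<bullet> x\<^sub>0 \<noteq> 0" for x\<^sub>0
  proof (intro exI conjI allI impI)
    let ?H = "{v. \<xi> \<bullet> P v = 0}"
    show "subspace ?H"
      using linear_orth_proj[OF fixed_Q]
      by (simp add: P_def subspace_def linear_add linear_scale inner_add_right linear_0)
    have "x\<^sub>0 \<notin> ?H"
      using that orth_proj_id[OF fixed_Q] by (simp add: P_def)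
    then show "?H \<noteq> UNIV"
      by blast
    fix a' u' U'
    assume "nsb_traj \<gamma> r e nuf a' u' U' \<and> a' 0 \<bullet> e = 0 \<and> (\<forall>j. transv e (a' j) = transv e (a j))
      \<and> Lambda_vec \<gamma> r e (u' 0) (U' 0) \<notin> ?H"
    then have "\<not> bounded (range (\<lambda>l. a' l \<bullet> e))"
      using drift_unbounded[OF drift] by auto
    then show "\<not> bounded (range a')"
      using bounded_linear_image[OF _ bounded_linear_inner_left, of "range a'" e]
      unfolding image_image by blast
  qed
  ultimately show ?thesis
    unfolding \<kappa>_def by blast
qed

end
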